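(* Let $\Omega$ be a pointed solid closed convex cone in a finite-dimensional real inner product space $X$ with $\Omega^*$ facially compact and locally smooth, and $1\le j\le d$. Let $(E,F),(E,F_k^i)\in\mathcal P_j$ for $k\in\mathbb N$, $i=0,1$, with $F_k^i\to F$ (Fell topology) as $k\to\infty$, and let $\varepsilon_k\to0^+$. If the limit $v=\lim_k\varepsilon_k^{-1}\bigl(e_{F_k^0}(E)-e_{F_k^1}(E)\bigr)$ exists, then $v\in E_{1/2}(F)$.
   Context: $A^*=\{y:\langle y,a\rangle\ge0\ \forall a\in A\}$, $A^\circledast=A^*\cap\operatorname{span}A$. Faces: subsets $F$ of a convex set such that every segment with midpoint in $F$ lies in $F$. $0=n_0<\dots<n_d=\dim X$ are the dimensions of faces of $\Omega^*$, $P_j$ the faces of dimension $n_{d-j}$ with the Fell topology (from closed subsets of $X$); facially compact: each $P_j$ compact. Modular face of a cone $C$: a face $E$ containing a face of dimension $\max\{\dim G:G\text{ face of }C,\dim G<\dim E\}$; smooth: relative interiors of those maximal-dimensional proper faces consist of regular points of $E$; locally smooth: all modular faces smooth. $\mathcal P_j=\{(E,F)\in P_{j-1}\times P_j:E\supset F\}$; $e_F(E)$ is the unit generator of the extreme ray $F^\perp\cap E^\circledast$ of $E^\circledast$; $E_{1/2}(F)=\operatorname{span}(E)\cap F^\perp\cap e_F(E)^\perp$. *)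

theory Defs
  imports "HOL-Analysis.Analysis"
begin

definition dual_cone :: "'a::euclidean_space set \<Rightarrow> 'a set" where
  "dual_cone A = {y. \<forall>a\<in>A. y \<bullet> a \<ge> 0}"

definition rel_dual_cone :: "'a::euclidean_space set \<Rightarrow> 'a set" where
  "rel_dual_cone A = dual_cone A \<inter> span A"

definition orth :: "'a::euclidean_space set \<Rightarrow> 'a set" where
  "orth A = {y. \<forall>a\<in>A. y \<bullet> a = 0}"

definition pointed_solid_closed_convex_cone :: "'a::euclidean_space set \<Rightarrow> bool" where
  "pointed_solid_closed_convex_cone \<Omega> \<longleftrightarrow>
     convex_cone \<Omega> \<and> closed \<Omega> \<and> interior \<Omega> \<noteq> {} \<and> \<Omega> \<inter> uminus ` \<Omega> = {0}"

definition faces :: "'a::euclidean_space set \<Rightarrow> 'a set set" where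
  "faces C = {G. G face_of C \<and> G \<noteq> {}}"

definition face_dims :: "'a::euclidean_space set \<Rightarrow> nat set" where
  "face_dims C = dim ` faces C"

definition face_dim_n :: "'a::euclidean_space set \<Rightarrow> nat \<Rightarrow> nat" where
  "face_dim_n C i = sorted_list_of_set (face_dims C) ! i"

definition face_dim_d :: "'a::euclidean_space set \<Rightarrow> nat" where
  "face_dim_d C = card (face_dims C) - 1"

definition P_faces :: "'a::euclidean_space set \<Rightarrow> nat \<Rightarrow> 'a set set" where
  "P_faces C j = {G \<in> faces C. dim G = face_dim_n C (face_dim_d C - j)}"

definition P_pairs :: "'a::euclidean_space set \<Rightarrow> nat \<Rightarrow> ('a set \<times> 'a set) set" where
  "P_pairs C j = {(E, F). E \<in> P_faces C (j - 1) \<and> F \<in> P_faces C j \<and> F \<subseteq> E}"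

definition fell_topology :: "'a::euclidean_space set topology" where
  "fell_topology = subtopology
     (topology_generated_by
        ({{A. A \<inter> K = {}} | K. compact K} \<union> {{A. A \<inter> U \<noteq> {}} | U. open U}))
     {A. closed A}"

definition facially_compact :: "'a::euclidean_space set \<Rightarrow> bool" where
  "facially_compact C \<longleftrightarrow> (\<forall>j \<le> face_dim_d C. compactin fell_topology (P_faces C j))"

text \<open>Regular point of a cone E (relative to span E): at most one supporting
  hyperplane direction, i.e. the dual face of x in E^circledast has dimension at most 1.\<close>
definition regular_point :: "'a::euclidean_space set \<Rightarrow> 'a \<Rightarrow> bool" where
  "regular_point E x \<longleftrightarrow> x \<in> E \<and> dim {y \<in> rel_dual_cone E. y \<bullet> x = 0} \<le> 1"

definition sub_dim :: "'a::euclidean_space set \<Rightarrow> 'a set \<Rightarrow> nat" where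
  "sub_dim C E = Max {dim G | G. G \<in> faces C \<and> dim G < dim E}"

definition modular_face :: "'a::euclidean_space set \<Rightarrow> 'a set \<Rightarrow> bool" where
  "modular_face C E \<longleftrightarrow> E \<in> faces C \<and> (\<exists>G \<in> faces C. dim G < dim E) \<and>
     (\<exists>G \<in> faces C. G \<subseteq> E \<and> dim G = sub_dim C E)"

definition smooth_face :: "'a::euclidean_space set \<Rightarrow> 'a set \<Rightarrow> bool" where
  "smooth_face C E \<longleftrightarrow>
     (\<forall>G \<in> faces C. G \<subseteq> E \<and> dim G = sub_dim C E \<longrightarrow>
        (\<forall>x \<in> rel_interior G. regular_point E x))"

definition locally_smooth :: "'a::euclidean_space set \<Rightarrow> bool" where
  "locally_smooth C \<longleftrightarrow> (\<forall>E. modular_face C E \<longrightarrow> smooth_face C E)"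

definition e_gen :: "'a::euclidean_space set \<Rightarrow> 'a set \<Rightarrow> 'a" where
  "e_gen F E = (THE u. norm u = 1 \<and> orth F \<inter> rel_dual_cone E = {t *\<^sub>R u | t. t \<ge> 0})"

definition E_half :: "'a::euclidean_space set \<Rightarrow> 'a set \<Rightarrow> 'a set" where
  "E_half E F = span E \<inter> orth F \<inter> orth {e_gen F E}"

end

theory Submission
  imports Defs
begin

text \<open>Write w k for the difference quotients. Each w k lies in span E, hence so does v.
  Approximating a point x of F by points of F_k^0 and of F_k^1, w k is \<le> 0 at the former
  and \<ge> 0 at the latter, so v \<bullet> x = 0. For the last condition, local smoothness makes
  every e_G(E) the unit generator of a genuine ray: at a regular point the dual face has
  dimension at most 1, and a supporting hyperplane at a relative boundary point of E supplies a
  nonzero element. Limits of e_{F_k^0}(E) lie on the ray of F, so a subsequence tends to e_F(E);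
  since (a - b) \<bullet> a = |a - b|^2 / 2 for unit vectors, w k \<bullet> e_{F_k^0}(E) = \<epsilon> k |w k|^2 / 2
  tends to 0, giving v \<bullet> e_F(E) = 0.\<close>

lemma convex_cone_dual_cone: "convex_cone (dual_cone A)"
  unfolding convex_cone_iff dual_cone_def by (auto simp: inner_add_left)

lemma closed_dual_cone: "closed (dual_cone A)"
proof -
  have "dual_cone A = (\<Inter>a\<in>A. {y. 0 \<le> a \<bullet> y})"
    unfolding dual_cone_def by (auto simp: inner_commute)
  then show ?thesis by (simp add: closed_INT closed_halfspace_ge)
qed

lemma closed_rel_dual_cone: "closed (rel_dual_cone A)"
  unfolding rel_dual_cone_def by (simp add: closed_Int closed_dual_cone)

lemma rel_dual_cone_subset_dual_cone: "A \<subseteq> B \<Longrightarrow> rel_dual_cone B \<subseteq> dual_cone A"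
  unfolding rel_dual_cone_def dual_cone_def by auto

definition unit_generator :: "'a::euclidean_space \<Rightarrow> 'a set \<Rightarrow> bool" where
  "unit_generator u S \<longleftrightarrow> norm u = 1 \<and> S = {t *\<^sub>R u | t. t \<ge> 0}"

lemma unit_generator_mem: "unit_generator u S \<Longrightarrow> u \<in> S"
  unfolding unit_generator_def by (auto intro: exI[of _ 1])

lemma unit_generator_unique:
  assumes "unit_generator u S" "g \<in> S" "norm g = 1"
  shows "g = u"
proof -
  obtain t where "t \<ge> 0" "g = t *\<^sub>R u"
    using assms(1,2) unfolding unit_generator_def by blast
  moreover from this have "t = 1"
    using assms unfolding unit_generator_def by simp
  ultimately show ?thesis by simp
qed

lemma e_gen_eqI:
  assumes "unit_generator u (orth G \<inter> rel_dual_cone E)"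
  shows "e_gen G E = u"
  unfolding e_gen_def unit_generator_def[symmetric]
proof (rule the_equality)
  fix u' assume "unit_generator u' (orth G \<inter> rel_dual_cone E)"
  then show "u' = u"
    using assms unit_generator_unique unit_generator_mem unit_generator_def by metis
qed (fact assms)

lemma unit_generator_ray:
  fixes a y :: "'a::euclidean_space"
  assumes "conic S" "dim S \<le> 1" "a \<in> S" "a \<bullet> y > 0" "\<And>s. s \<in> S \<Longrightarrow> s \<bullet> y \<ge> 0"
  shows "unit_generator (sgn a) S"
proof -
  have a0: "a \<noteq> 0" using assms(4) by auto
  have "S \<subseteq> {t *\<^sub>R a | t. t \<ge> 0}"
  proof
    fix s assume s: "s \<in> S"
    have "s \<in> span {a}"
    proof (rule ccontr)
      assume "s \<notin> span {a}"
      moreover have "s \<noteq> a" using calculation span_base[of a "{a}"] by blast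
      ultimately have "independent {s, a}" "card {s, a} = 2"
        using a0 by (auto simp: independent_insert)
      then have "2 \<le> dim S"
        using independent_card_le_dim[of "{s, a}" S] s assms(3) by simp
      then show False using assms(2) by simp
    qed
    then obtain c where c: "s = c *\<^sub>R a" by (auto simp: span_singleton)
    then have "c \<ge> 0"
      using assms(4) assms(5)[OF s] by (simp add: zero_le_mult_iff)
    then show "s \<in> {t *\<^sub>R a | t. t \<ge> 0}" using c by blast
  qed
  moreover have "{t *\<^sub>R a | t. t \<ge> 0} \<subseteq> S"
    using assms(1,3) conicD by blast
  moreover have "{t *\<^sub>R a | t. t \<ge> 0} = {t *\<^sub>R sgn a | t. t \<ge> 0}"
  proof -
    have "t *\<^sub>R a = (t * norm a) *\<^sub>R sgn a" "t *\<^sub>R sgn a = (t / norm a) *\<^sub>R a" for t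
      using a0 by (simp_all add: sgn_div_norm divide_inverse)
    then show ?thesis by (fastforce simp: a0)
  qed
  ultimately show ?thesis
    unfolding unit_generator_def using a0 by (simp add: norm_sgn)
qed

lemma inner_zero_on_convex_if_zero_at_rel_interior:
  fixes G :: "'a::euclidean_space set"
  assumes "convex G" "x \<in> rel_interior G" "y \<bullet> x = 0" "\<And>z. z \<in> G \<Longrightarrow> y \<bullet> z \<ge> 0"
  shows "G \<subseteq> orth {y}"
proof -
  have "G \<inter> {z. y \<bullet> z = 0} face_of G"
    using assms(1,4) by (intro face_of_Int_supporting_hyperplane_ge) auto
  then have "G \<subseteq> G \<inter> {z. y \<bullet> z = 0}"
    by (rule subset_of_face_of) (use assms(2,3) rel_interior_subset in auto)
  then show ?thesis unfolding orth_def by (auto simp: inner_commute)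
qed

lemma orth_Int_rel_dual_cone_eq:
  fixes G E :: "'a::euclidean_space set"
  assumes "convex G" "G \<subseteq> E" "x \<in> rel_interior G"
  shows "orth G \<inter> rel_dual_cone E = {y \<in> rel_dual_cone E. y \<bullet> x = 0}"
proof -
  have "y \<in> orth G" if "y \<in> rel_dual_cone E" "y \<bullet> x = 0" for y
    using inner_zero_on_convex_if_zero_at_rel_interior[OF assms(1,3), of y] that assms(2)
    unfolding orth_def rel_dual_cone_def dual_cone_def by (auto simp: inner_commute)
  moreover have "x \<in> G" using assms(3) rel_interior_subset by blast
  ultimately show ?thesis unfolding orth_def by auto
qed

text \<open>The supporting hyperplane at a relative boundary point passes through the apex,
  and its normal can be projected into the span without changing it on the cone.\<close>
lemma rel_dual_cone_supporting:
  fixes E :: "'a::euclidean_space set"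
  assumes "conic E" "convex E" "x \<in> E" "x \<notin> rel_interior E"
  obtains a y where "a \<in> rel_dual_cone E" "a \<bullet> x = 0" "y \<in> E" "a \<bullet> y > 0"
proof -
  obtain a where le: "\<And>y. y \<in> E \<Longrightarrow> a \<bullet> x \<le> a \<bullet> y"
    and less: "\<And>y. y \<in> rel_interior E \<Longrightarrow> a \<bullet> x < a \<bullet> y"
    using supporting_hyperplane_rel_boundary[OF assms(2-4)] by blast
  have "a \<bullet> x = 0"
    using le[of 0] le[of "2 *\<^sub>R x"] conicD[OF assms(1,3)] by fastforce
  obtain y where y: "y \<in> rel_interior E"
    using assms(2,3) rel_interior_eq_empty by blast
  obtain a' b where a': "a' \<in> span E" and b: "\<And>w. w \<in> span E \<Longrightarrow> orthogonal b w"
    and ab: "a = a' + b"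
    using orthogonal_subspace_decomp_exists[of E a] by blast
  have same: "a' \<bullet> w = a \<bullet> w" if "w \<in> E" for w
    using b[OF span_base[OF that]] ab unfolding orthogonal_def by (simp add: inner_add_left)
  show ?thesis
  proof
    show "a' \<in> rel_dual_cone E"
      unfolding rel_dual_cone_def dual_cone_def using a' le same \<open>a \<bullet> x = 0\<close> by auto
    show "a' \<bullet> x = 0" using same[OF assms(3)] \<open>a \<bullet> x = 0\<close> by simp
    show "y \<in> E" using y rel_interior_subset by blast
    then show "a' \<bullet> y > 0" using same less[OF y] \<open>a \<bullet> x = 0\<close> by simp
  qed
qed

lemma unit_generator_e_gen:
  fixes C E G :: "'a::euclidean_space set"
  assumes "convex_cone C" "E face_of C" "G face_of C" "G \<noteq> {}" "G \<subseteq> E" "dim G < dim E"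
    and regular: "\<And>x. x \<in> rel_interior G \<Longrightarrow> regular_point E x"
  shows "unit_generator (e_gen G E) (orth G \<inter> rel_dual_cone E)"
proof -
  have "convex G" "convex E" using assms(2,3) face_of_imp_convex by blast+
  have "conic E" using face_of_conic assms(1,2) unfolding convex_cone_def by blast
  obtain x where x: "x \<in> rel_interior G"
    using assms(4) \<open>convex G\<close> rel_interior_eq_empty by blast
  define S where "S = {y \<in> rel_dual_cone E. y \<bullet> x = 0}"
  have S: "orth G \<inter> rel_dual_cone E = S"
    unfolding S_def using orth_Int_rel_dual_cone_eq[OF \<open>convex G\<close> assms(5) x] .
  have "x \<notin> rel_interior E"
  proof -
    have "G face_of E" using face_of_subset[OF assms(3,5) face_of_imp_subset[OF assms(2)]] .
    moreover have "G \<noteq> E" using assms(6) by auto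
    ultimately have "G \<inter> rel_interior E = {}" by (rule face_of_disjoint_rel_interior)
    then show ?thesis using x rel_interior_subset by blast
  qed
  moreover have "x \<in> E" using x rel_interior_subset assms(5) by blast
  ultimately obtain a y where a: "a \<in> S" and y: "y \<in> E" "a \<bullet> y > 0"
    using rel_dual_cone_supporting[OF \<open>conic E\<close> \<open>convex E\<close>] unfolding S_def by blast
  have "conic S"
    unfolding S_def rel_dual_cone_def dual_cone_def conic_def by (auto simp: span_mul)
  moreover have "dim S \<le> 1" using regular[OF x] unfolding regular_point_def S_def by simp
  moreover have "s \<bullet> y \<ge> 0" if "s \<in> S" for s
    using that y unfolding S_def rel_dual_cone_def dual_cone_def by auto
  ultimately have "unit_generator (sgn a) S"
    by (rule unit_generator_ray[OF _ _ a y(2)])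
  then show ?thesis using S e_gen_eqI by metis
qed

lemma finite_face_dims: "finite (face_dims (C :: 'a::euclidean_space set))"
proof (rule finite_subset)
  show "face_dims C \<subseteq> {..DIM('a)}"
    unfolding face_dims_def using dim_subset_UNIV by fastforce
qed simp

lemma P_faces_consecutive_dims:
  fixes C :: "'a::euclidean_space set"
  assumes "1 \<le> j" "j \<le> face_dim_d C" "E \<in> P_faces C (j - 1)" "G \<in> P_faces C j"
  shows "dim G < dim E" "sub_dim C E = dim G"
proof -
  define ns where "ns = sorted_list_of_set (face_dims C)"
  define i where "i = face_dim_d C - j"
  have sorted: "sorted_wrt (<) ns" "sorted ns" and set_ns: "set ns = face_dims C"
    unfolding ns_def using finite_face_dims[of C] by simp_all
  have i: "Suc i < length ns"
    using assms(1,2) finite_face_dims unfolding ns_def i_def face_dim_d_def by simp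
  have dG: "dim G = ns ! i" and dE: "dim E = ns ! Suc i"
    using assms unfolding P_faces_def face_dim_n_def ns_def i_def by (simp_all add: Suc_diff_le)
  show "dim G < dim E" unfolding dG dE using sorted_wrt_nth_less[OF sorted(1)] i by simp
  define M where "M = {dim H | H. H \<in> faces C \<and> dim H < dim E}"
  have "dim G \<in> M"
    using assms(4) \<open>dim G < dim E\<close> unfolding M_def P_faces_def by blast
  moreover have "m \<le> dim G" if m: "m \<in> M" for m
  proof -
    have "m \<in> set ns" using m set_ns unfolding M_def face_dims_def by auto
    then obtain l where l: "l < length ns" "m = ns ! l" by (auto simp: in_set_conv_nth)
    have "ns ! l < ns ! Suc i" using m l dE unfolding M_def by auto
    have "l \<le> i"
    proof (rule ccontr)
      assume "\<not> l \<le> i"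
      then have "ns ! Suc i \<le> ns ! l"
        using l(1) by (auto intro!: sorted_nth_mono sorted(2))
      with \<open>ns ! l < ns ! Suc i\<close> show False by simp
    qed
    then show ?thesis using sorted_nth_mono[OF sorted(2), of l i] i l dG by simp
  qed
  moreover have "finite M"
    using finite_face_dims[of C] by (rule rev_finite_subset) (auto simp: M_def face_dims_def)
  ultimately show "sub_dim C E = dim G"
    unfolding sub_dim_def M_def[symmetric] by (intro Max_eqI) auto
qed

lemma unit_generator_e_gen_P_faces:
  fixes C :: "'a::euclidean_space set"
  assumes "convex_cone C" "locally_smooth C" "1 \<le> j" "j \<le> face_dim_d C"
    and "E \<in> P_faces C (j - 1)" "G \<in> P_faces C j" "G \<subseteq> E"
  shows "unit_generator (e_gen G E) (orth G \<inter> rel_dual_cone E)"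
proof -
  note dims = P_faces_consecutive_dims[OF assms(3-6)]
  have faces: "E \<in> faces C" "G \<in> faces C"
    using assms(5,6) unfolding P_faces_def by auto
  then have "modular_face C E"
    unfolding modular_face_def using dims assms(7) by auto
  then have "smooth_face C E" using assms(2) unfolding locally_smooth_def by blast
  then show ?thesis
    using faces dims assms(7)
    by (intro unit_generator_e_gen[OF assms(1)]) (auto simp: smooth_face_def faces_def)
qed

lemma P_faces_closed_nonempty:
  fixes C :: "'a::euclidean_space set"
  assumes "convex C" "closed C" "G \<in> P_faces C j"
  shows "closed G" "G \<noteq> {}"
  using assms face_of_imp_closed unfolding P_faces_def faces_def by auto

lemma fell_limit_approximation:
  fixes G :: "nat \<Rightarrow> 'a::euclidean_space set"
  assumes lim: "limitin fell_topology G F sequentially"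
    and "\<And>k. closed (G k)" "\<And>k. G k \<noteq> {}" "x \<in> F"
  obtains y where "\<And>k. y k \<in> G k" "y \<longlonglongrightarrow> x"
proof -
  have "\<forall>k. \<exists>yk \<in> G k. \<forall>z \<in> G k. dist x yk \<le> dist x z"
    using distance_attains_inf[OF assms(2,3)] by metis
  then obtain y where y: "\<And>k. y k \<in> G k" and nearest: "\<And>k z. z \<in> G k \<Longrightarrow> dist x (y k) \<le> dist x z"
    by metis
  have "closed F"
    using lim unfolding limitin_sequentially fell_topology_def by simp
  have hits: "\<forall>\<^sub>F k in sequentially. G k \<inter> ball x r \<noteq> {}" if "r > 0" for r
  proof -
    let ?U = "{A::'a set. closed A \<and> A \<inter> ball x r \<noteq> {}}"
    have "openin (topology_generated_by
        ({{A. A \<inter> K = {}} | K. compact K} \<union> {{A::'a set. A \<inter> U \<noteq> {}} | U. open U}))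
        {A. A \<inter> ball x r \<noteq> {}}"
      by (rule topology_generated_by_Basis) blast
    then have "openin fell_topology ?U"
      unfolding fell_topology_def openin_subtopology by blast
    moreover have "F \<in> ?U" using \<open>closed F\<close> assms(4) that by auto
    ultimately have "\<forall>\<^sub>F k in sequentially. G k \<in> ?U"
      using lim unfolding limitin_def by blast
    then show ?thesis by (rule eventually_mono) simp
  qed
  have "y \<longlonglongrightarrow> x"
  proof (rule tendstoI)
    fix r :: real assume "r > 0"
    show "\<forall>\<^sub>F k in sequentially. dist (y k) x < r"
      using hits[OF \<open>r > 0\<close>]
      by (rule eventually_mono) (use nearest in \<open>fastforce simp: dist_commute\<close>)
  qed
  then show ?thesis using that y by blast
qed

lemma orth_limit_difference_quotient:
  fixes F :: "'a::euclidean_space set" and e0 e1 :: "nat \<Rightarrow> 'a"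
  assumes "\<And>k. e0 k \<in> orth (F0 k) \<inter> dual_cone (F1 k)" "\<And>k. e1 k \<in> orth (F1 k) \<inter> dual_cone (F0 k)"
    and "limitin fell_topology F0 F sequentially" "\<And>k. closed (F0 k)" "\<And>k. F0 k \<noteq> {}"
    and "limitin fell_topology F1 F sequentially" "\<And>k. closed (F1 k)" "\<And>k. F1 k \<noteq> {}"
    and "\<And>k. \<epsilon> k > 0" and w: "(\<lambda>k. (1 / \<epsilon> k) *\<^sub>R (e0 k - e1 k)) \<longlonglongrightarrow> v"
  shows "v \<in> orth F"
  unfolding orth_def
proof (intro CollectI ballI)
  fix x assume "x \<in> F"
  obtain y0 where y0: "\<And>k. y0 k \<in> F0 k" "y0 \<longlonglongrightarrow> x"
    using fell_limit_approximation[OF assms(3-5) \<open>x \<in> F\<close>] by blast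
  obtain y1 where y1: "\<And>k. y1 k \<in> F1 k" "y1 \<longlonglongrightarrow> x"
    using fell_limit_approximation[OF assms(6-8) \<open>x \<in> F\<close>] by blast
  have "(\<lambda>k. (1 / \<epsilon> k) *\<^sub>R (e0 k - e1 k) \<bullet> y0 k) \<longlonglongrightarrow> v \<bullet> x"
    by (intro tendsto_inner w y0(2))
  moreover have "(1 / \<epsilon> k) *\<^sub>R (e0 k - e1 k) \<bullet> y0 k \<le> 0" for k
    using assms(1,2,9)[of k] y0(1)[of k]
    by (auto simp: orth_def dual_cone_def inner_diff_left divide_nonpos_pos)
  ultimately have "v \<bullet> x \<le> 0" by (auto intro: Lim_bounded[where M = 0])
  have "(\<lambda>k. (1 / \<epsilon> k) *\<^sub>R (e0 k - e1 k) \<bullet> y1 k) \<longlonglongrightarrow> v \<bullet> x"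
    by (intro tendsto_inner w y1(2))
  moreover have "(1 / \<epsilon> k) *\<^sub>R (e0 k - e1 k) \<bullet> y1 k \<ge> 0" for k
    using assms(1,2,9)[of k] y1(1)[of k]
    by (auto simp: orth_def dual_cone_def inner_diff_left)
  ultimately have "v \<bullet> x \<ge> 0" by (auto intro: Lim_bounded2[where N = 0])
  with \<open>v \<bullet> x \<le> 0\<close> show "v \<bullet> x = 0" by simp
qed

lemma limit_in_orth_Int_rel_dual_cone:
  fixes e :: "nat \<Rightarrow> 'a::euclidean_space"
  assumes "\<And>k. e k \<in> orth (G k) \<inter> rel_dual_cone E" "e \<longlonglongrightarrow> g"
    and "limitin fell_topology G F sequentially" "\<And>k. closed (G k)" "\<And>k. G k \<noteq> {}"
  shows "g \<in> orth F \<inter> rel_dual_cone E"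
proof -
  have "g \<in> rel_dual_cone E"
    by (rule Lim_in_closed_set[OF closed_rel_dual_cone _ _ assms(2)]) (use assms(1) in auto)
  moreover have "g \<bullet> x = 0" if x: "x \<in> F" for x
  proof -
    obtain y where y: "\<And>k. y k \<in> G k" "y \<longlonglongrightarrow> x"
      using fell_limit_approximation[OF assms(3-5) x] by blast
    have "(\<lambda>k. e k \<bullet> y k) \<longlonglongrightarrow> g \<bullet> x" by (intro tendsto_inner assms(2) y(2))
    moreover have "e k \<bullet> y k = 0" for k using assms(1)[of k] y(1)[of k] by (auto simp: orth_def)
    ultimately show ?thesis by (simp add: LIMSEQ_const_iff)
  qed
  ultimately show ?thesis unfolding orth_def by blast
qed

lemma inner_diff_unit_vectors:
  fixes a b :: "'a::real_inner"
  assumes "norm a = 1" "norm b = 1"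
  shows "(a - b) \<bullet> a = (norm (a - b))\<^sup>2 / 2"
proof -
  have "a \<bullet> a = 1" "b \<bullet> b = 1" using assms by (simp_all add: norm_eq_1)
  then show ?thesis
    by (simp add: power2_norm_eq_inner inner_diff_left inner_diff_right inner_commute)
qed

text \<open>Along a subsequence e0 converges to a unit vector of the limit ray, which must be u;
  meanwhile w k \<bullet> e0 k = \<epsilon> k |w k|^2 / 2 tends to 0 for the difference quotients w k.\<close>
lemma inner_limit_difference_quotient_generator:
  fixes e0 e1 :: "nat \<Rightarrow> 'a::euclidean_space"
  assumes u: "unit_generator u (orth F \<inter> rel_dual_cone E)"
    and "\<And>k. e0 k \<in> orth (F0 k) \<inter> rel_dual_cone E" "\<And>k. norm (e0 k) = 1" "\<And>k. norm (e1 k) = 1"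
    and "limitin fell_topology F0 F sequentially" "\<And>k. closed (F0 k)" "\<And>k. F0 k \<noteq> {}"
    and "\<And>k. \<epsilon> k > 0" "\<epsilon> \<longlonglongrightarrow> 0"
    and w: "(\<lambda>k. (1 / \<epsilon> k) *\<^sub>R (e0 k - e1 k)) \<longlonglongrightarrow> v"
  shows "v \<bullet> u = 0"
proof -
  define w where "w k = (1 / \<epsilon> k) *\<^sub>R (e0 k - e1 k)" for k
  obtain g r where "norm g = 1" "strict_mono r" and g: "(e0 \<circ> r) \<longlonglongrightarrow> g"
    using compact_sphere[of 0 1] assms(3)
    by (auto simp: compact_def dist_norm elim!: allE[of _ e0])
  have "g \<in> orth F \<inter> rel_dual_cone E"
    using \<open>strict_mono r\<close> assms(2,5-7)
    by (intro limit_in_orth_Int_rel_dual_cone[OF _ g, of "F0 \<circ> r"]) (auto intro: limitin_subsequence)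
  then have "g = u" using unit_generator_unique[OF u] \<open>norm g = 1\<close> by blast
  have quotient: "w k \<bullet> e0 k = \<epsilon> k * (norm (w k))\<^sup>2 / 2" for k
  proof -
    have "w k \<bullet> e0 k = (1 / \<epsilon> k) * ((e0 k - e1 k) \<bullet> e0 k)"
      by (simp only: w_def inner_scaleR_left)
    also have "\<dots> = (1 / \<epsilon> k) * (norm (e0 k - e1 k))\<^sup>2 / 2"
      by (simp add: inner_diff_unit_vectors assms(3,4))
    also have "\<dots> = \<epsilon> k * (norm (w k))\<^sup>2 / 2"
      using assms(8)[of k] by (simp only: w_def norm_scaleR) (simp add: power2_eq_square)
    finally show ?thesis .
  qed
  have "(\<lambda>k. \<epsilon> k * (norm (w k))\<^sup>2 / 2) \<longlonglongrightarrow> 0 * (norm v)\<^sup>2 / 2"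
    using w unfolding w_def[symmetric] by (intro tendsto_intros assms(9)) auto
  then have "(\<lambda>k. w k \<bullet> e0 k) \<longlonglongrightarrow> 0" unfolding quotient by simp
  from LIMSEQ_subseq_LIMSEQ[OF this \<open>strict_mono r\<close>]
  have "(\<lambda>k. w (r k) \<bullet> e0 (r k)) \<longlonglongrightarrow> 0" by (simp add: o_def)
  moreover have "(\<lambda>k. w (r k) \<bullet> e0 (r k)) \<longlonglongrightarrow> v \<bullet> g"
    using LIMSEQ_subseq_LIMSEQ[OF w[folded w_def] \<open>strict_mono r\<close>] g
    by (intro tendsto_inner) (auto simp: o_def)
  ultimately show ?thesis using LIMSEQ_unique \<open>g = u\<close> by blast
qed

lemma E_half_limit_difference_quotient:
  fixes E F :: "'a::euclidean_space set" and F0 F1 :: "nat \<Rightarrow> 'a set"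
  assumes gen: "\<And>G. G \<in> insert F (range F0 \<union> range F1) \<Longrightarrow>
      unit_generator (e_gen G E) (orth G \<inter> rel_dual_cone E)"
    and faces: "\<And>G. G \<in> insert F (range F0 \<union> range F1) \<Longrightarrow> G \<subseteq> E \<and> closed G \<and> G \<noteq> {}"
    and "limitin fell_topology F0 F sequentially" "limitin fell_topology F1 F sequentially"
    and "\<And>k. \<epsilon> k > 0" "\<epsilon> \<longlonglongrightarrow> 0"
    and w: "(\<lambda>k. (1 / \<epsilon> k) *\<^sub>R (e_gen (F0 k) E - e_gen (F1 k) E)) \<longlonglongrightarrow> v"
  shows "v \<in> E_half E F"
proof -
  have F: "unit_generator (e_gen F E) (orth F \<inter> rel_dual_cone E)" using gen by simp
  have e: "e_gen G E \<in> orth G \<inter> rel_dual_cone E" "norm (e_gen G E) = 1"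
    "rel_dual_cone E \<subseteq> dual_cone G" "closed G" "G \<noteq> {}"
    if "G \<in> range F0 \<union> range F1" for G
  proof -
    from that have G: "G \<in> insert F (range F0 \<union> range F1)" by blast
    show "e_gen G E \<in> orth G \<inter> rel_dual_cone E" using unit_generator_mem[OF gen[OF G]] .
    show "norm (e_gen G E) = 1" using gen[OF G] unfolding unit_generator_def by blast
    show "rel_dual_cone E \<subseteq> dual_cone G" "closed G" "G \<noteq> {}"
      using faces[OF G] rel_dual_cone_subset_dual_cone[of G E] by blast+
  qed
  have "v \<in> span E"
  proof (rule Lim_in_closed_set[OF closed_span _ _ w])
    have "e_gen (F0 k) E \<in> span E" "e_gen (F1 k) E \<in> span E" for k
      using e(1)[of "F0 k"] e(1)[of "F1 k"] unfolding rel_dual_cone_def by blast+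
    then show "\<forall>\<^sub>F k in sequentially. (1 / \<epsilon> k) *\<^sub>R (e_gen (F0 k) E - e_gen (F1 k) E) \<in> span E"
      by (intro always_eventually allI span_mul span_diff)
  qed simp
  moreover have "v \<in> orth F"
  proof (rule orth_limit_difference_quotient[OF _ _ assms(3) _ _ assms(4) _ _ assms(5) w])
    fix k
    show "e_gen (F0 k) E \<in> orth (F0 k) \<inter> dual_cone (F1 k)"
      "e_gen (F1 k) E \<in> orth (F1 k) \<inter> dual_cone (F0 k)"
      "closed (F0 k)" "F0 k \<noteq> {}" "closed (F1 k)" "F1 k \<noteq> {}"
      using e(1,3-5)[of "F0 k"] e(1,3-5)[of "F1 k"] by blast+
  qed
  moreover have "v \<bullet> e_gen F E = 0"
  proof (rule inner_limit_difference_quotient_generator[OF F _ _ _ assms(3) _ _ assms(5,6) w])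
    fix k
    show "e_gen (F0 k) E \<in> orth (F0 k) \<inter> rel_dual_cone E" "norm (e_gen (F0 k) E) = 1"
      "norm (e_gen (F1 k) E) = 1" "closed (F0 k)" "F0 k \<noteq> {}"
      using e[of "F0 k"] e(2)[of "F1 k"] by blast+
  qed
  ultimately show ?thesis unfolding E_half_def orth_def by (simp add: inner_commute)
qed

theorem mainTheorem13:
  fixes \<Omega> :: "'a::euclidean_space set"
    and j :: nat and E F :: "'a set"
    and F0 F1 :: "nat \<Rightarrow> 'a set"
    and \<epsilon> :: "nat \<Rightarrow> real" and v :: 'a
  assumes "pointed_solid_closed_convex_cone \<Omega>"
    and "facially_compact (dual_cone \<Omega>)"
    and "locally_smooth (dual_cone \<Omega>)"
    and "1 \<le> j" "j \<le> face_dim_d (dual_cone \<Omega>)"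
    and "(E, F) \<in> P_pairs (dual_cone \<Omega>) j"
    and "\<And>k. (E, F0 k) \<in> P_pairs (dual_cone \<Omega>) j"
    and "\<And>k. (E, F1 k) \<in> P_pairs (dual_cone \<Omega>) j"
    and "limitin fell_topology F0 F sequentially"
    and "limitin fell_topology F1 F sequentially"
    and "\<And>k. \<epsilon> k > 0" "\<epsilon> \<longlonglongrightarrow> 0"
    and "(\<lambda>k. (1 / \<epsilon> k) *\<^sub>R (e_gen (F0 k) E - e_gen (F1 k) E)) \<longlonglongrightarrow> v"
  shows "v \<in> E_half E F"
proof -
  let ?C = "dual_cone \<Omega>"
  have C: "convex_cone ?C" "convex ?C" "closed ?C"
    using convex_cone_dual_cone closed_dual_cone unfolding convex_cone_def by blast+
  have E: "E \<in> P_faces ?C (j - 1)" using assms(6) unfolding P_pairs_def by blast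
  show ?thesis
  proof (rule E_half_limit_difference_quotient[OF _ _ assms(9-13)])
    fix G assume "G \<in> insert F (range F0 \<union> range F1)"
    then have G: "G \<in> P_faces ?C j" "G \<subseteq> E" using assms(6-8) unfolding P_pairs_def by auto
    show "unit_generator (e_gen G E) (orth G \<inter> rel_dual_cone E)"
      using unit_generator_e_gen_P_faces[OF C(1) assms(3-5) E G] .
    show "G \<subseteq> E \<and> closed G \<and> G \<noteq> {}" using G P_faces_closed_nonempty[OF C(2,3) G(1)] by blast
  qed
qed

end
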